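(* (a) For $n\ge1$, the degree of $P_n$ is at most $n$. (b) For every $n$, $n!\,P_n(y)$ has integer coefficients.
   Context: Define polynomials $P_n(y)$ by $P_0(y)=y-1$ and, for $n\ge1$, $P_n=nP_{n-1}-P'_{n-1}+\frac{1}{n}\sum_{k=1}^{n-1}k\{(k-1)P_{k-1}-P_k-P'_{k-1}\}P_{n-k-1}$ (primes denote derivatives in $y$). Equivalently, $1+\sum_{n\ge1}P_{n-1}(y)x^{-n}$ is the unique solution $V$, in the ring of formal series $\sum_{n\ge0}q_n(y)x^{-n}$ with $\deg q_n\le n$, of $V=1+\frac{y}{x}-\frac{1}{x}V-V_x-\frac{1}{x}V_y+\frac{1}{x}\log V$, where $V_x,V_y$ are termwise formal derivatives and $\log$ is the formal logarithmic series. *)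

theory Defs
  imports "HOL-Computational_Algebra.Polynomial"
begin

definition Pnext :: "nat \<Rightarrow> rat poly list \<Rightarrow> rat poly" where
  "Pnext n L =
     smult (of_nat n) (L ! (n - 1)) - pderiv (L ! (n - 1))
     + smult (1 / of_nat n)
         (\<Sum>k = 1..n - 1. smult (of_nat k)
              (smult (of_nat (k - 1)) (L ! (k - 1)) - L ! k - pderiv (L ! (k - 1)))
            * L ! (n - k - 1))"

primrec Ps :: "nat \<Rightarrow> rat poly list" where
  "Ps 0 = [[:-1, 1:]]"
| "Ps (Suc m) = Ps m @ [Pnext (Suc m) (Ps m)]"

definition P :: "nat \<Rightarrow> rat poly" where
  "P n = Ps n ! n"

lemma length_Ps: "length (Ps n) = Suc n"
  by (induction n) auto

lemma Ps_nth: "i \<le> n \<Longrightarrow> Ps n ! i = P i"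
proof (induction n)
  case 0 then show ?case by (simp add: P_def)
next
  case (Suc n)
  show ?case
  proof (cases "i = Suc n")
    case True then show ?thesis by (simp add: P_def)
  next
    case False
    then have "i \<le> n" using Suc.prems by simp
    then show ?thesis using Suc.IH length_Ps[of n] by (simp add: nth_append)
  qed
qed

lemma P_0: "P 0 = [:-1, 1:]"
  by (simp add: P_def)

lemma P_rec:
  assumes "n \<ge> 1"
  shows "P n =
     smult (of_nat n) (P (n - 1)) - pderiv (P (n - 1))
     + smult (1 / of_nat n)
         (\<Sum>k = 1..n - 1. smult (of_nat k)
              (smult (of_nat (k - 1)) (P (k - 1)) - P k - pderiv (P (k - 1)))
            * P (n - k - 1))"
proof -
  obtain m where m: "n = Suc m" using assms by (cases n) auto
  have "P n = Pnext n (Ps m)" using m length_Ps[of m] by (simp add: P_def nth_append)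
  also have "\<dots> = smult (of_nat n) (P (n - 1)) - pderiv (P (n - 1))
     + smult (1 / of_nat n)
         (\<Sum>k = 1..n - 1. smult (of_nat k)
              (smult (of_nat (k - 1)) (P (k - 1)) - P k - pderiv (P (k - 1)))
            * P (n - k - 1))"
    unfolding Pnext_def using m
    by (intro arg_cong2[where f="(+)"] arg_cong2[where f=smult] sum.cong refl)
       (auto simp: Ps_nth)
  finally show ?thesis .
qed

end

theory Submission
  imports Defs
begin

text \<open>
  The degree bound is a direct induction: in the recursion, the summand indexed by \<open>k\<close> is a
  product of a polynomial of degree at most \<open>k\<close> and one of degree at most \<open>n - k\<close>.
  For integrality put \<open>Q n = n! P n\<close>. Multiplying the recursion by \<open>n!\<close> turns the factor
  \<open>1/n\<close> into \<open>(n-1)!\<close>, which splits as \<open>(n-1 choose k) \<cdot> k! \<cdot> (n-1-k)!\<close> and so distributes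
  over the two factors of each summand; the result is a recursion for \<open>Q\<close> with integer
  coefficients only.
\<close>

definition int_coeffs :: "'a::comm_ring_1 poly \<Rightarrow> bool" where
  "int_coeffs p \<longleftrightarrow> (\<forall>i. coeff p i \<in> \<int>)"

lemma int_coeffs_add: "int_coeffs p \<Longrightarrow> int_coeffs q \<Longrightarrow> int_coeffs (p + q)"
  by (auto simp: int_coeffs_def)

lemma int_coeffs_diff: "int_coeffs p \<Longrightarrow> int_coeffs q \<Longrightarrow> int_coeffs (p - q)"
  by (auto simp: int_coeffs_def)

lemma int_coeffs_smult_of_nat: "int_coeffs p \<Longrightarrow> int_coeffs (smult (of_nat c) p)"
  by (auto simp: int_coeffs_def)

lemma int_coeffs_mult: "int_coeffs p \<Longrightarrow> int_coeffs q \<Longrightarrow> int_coeffs (p * q)"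
  by (auto simp: int_coeffs_def coeff_mult intro!: Ints_sum Ints_mult)

lemma int_coeffs_sum: "(\<And>x. x \<in> A \<Longrightarrow> int_coeffs (f x)) \<Longrightarrow> int_coeffs (sum f A)"
  by (auto simp: int_coeffs_def coeff_sum intro!: Ints_sum)

lemma int_coeffs_pderiv:
  fixes p :: "'a::idom poly"
  shows "int_coeffs p \<Longrightarrow> int_coeffs (pderiv p)"
  by (auto simp: int_coeffs_def coeff_pderiv)

lemma smult_sum_right: "smult c (sum f A) = (\<Sum>x\<in>A. smult c (f x))"
  by (rule poly_eqI) (simp add: coeff_sum sum_distrib_left)

lemma degree_recursion_summand_le:
  fixes a b c :: "'a::{idom,ring_char_0} poly"
  assumes "degree a \<le> k" "degree b \<le> k" "degree c \<le> l"
  shows "degree (smult x (smult y a - b - pderiv a) * c) \<le> k + l"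
proof -
  have "degree (smult y a - b - pderiv a) \<le> k"
    using assms degree_smult_le[of y a] degree_pderiv[of a]
    by (intro degree_diff_le) auto
  then show ?thesis
    using assms(3) degree_mult_le[of "smult x (smult y a - b - pderiv a)" c]
      degree_smult_le[of x "smult y a - b - pderiv a"]
    by linarith
qed

lemma degree_P_le: "degree (P n) \<le> max n 1"
proof (induction n rule: less_induct)
  case (less n)
  show ?case
  proof (cases "n = 0")
    case True
    then show ?thesis by (simp add: P_0)
  next
    case False
    then have "n \<ge> 1" by simp
    have "degree (P (n - 1)) \<le> n"
      using less[of "n - 1"] False by simp
    then have leading: "degree (smult (of_nat n) (P (n - 1)) - pderiv (P (n - 1))) \<le> n"
      using degree_smult_le[of "of_nat n" "P (n - 1)"] degree_pderiv[of "P (n - 1)"]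
      by (intro degree_diff_le) auto
    have summand: "degree (smult (of_nat k)
          (smult (of_nat (k - 1)) (P (k - 1)) - P k - pderiv (P (k - 1))) * P (n - k - 1)) \<le> n"
      if "k \<in> {1..n - 1}" for k
    proof -
      have "degree (P (k - 1)) \<le> max (k - 1) 1"
        using that by (intro less.IH) auto
      moreover have "max (k - 1) 1 \<le> k"
        using that by auto
      ultimately have "degree (P (k - 1)) \<le> k"
        by (rule order_trans)
      moreover have "degree (P k) \<le> k"
        using less.IH[of k] that by auto
      moreover have "degree (P (n - k - 1)) \<le> n - k"
        using less.IH[of "n - k - 1"] that by auto
      ultimately have "degree (smult (of_nat k)
          (smult (of_nat (k - 1)) (P (k - 1)) - P k - pderiv (P (k - 1))) * P (n - k - 1))
          \<le> k + (n - k)"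
        by (rule degree_recursion_summand_le)
      also have "k + (n - k) = n"
        using that by auto
      finally show ?thesis .
    qed
    have "degree (P n) \<le> n"
      unfolding P_rec[OF \<open>n \<ge> 1\<close>]
      using summand
      by (intro degree_add_le[OF leading] order.trans[OF degree_smult_le] degree_sum_le) auto
    then show ?thesis by simp
  qed
qed

definition Q :: "nat \<Rightarrow> rat poly" where
  "Q n = smult (fact n) (P n)"

lemma fact_scaled_summand:
  assumes "1 \<le> k" "k \<le> m"
  shows "smult (fact m) (smult (of_nat k)
           (smult (of_nat (k - 1)) (P (k - 1)) - P k - pderiv (P (k - 1))) * P (m - k))
       = smult (of_nat ((m choose k) * k))
           ((smult (of_nat (k * (k - 1))) (Q (k - 1)) - Q k - smult (of_nat k) (pderiv (Q (k - 1))))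
            * Q (m - k))"
proof -
  define R where "R = smult (of_nat (k - 1)) (P (k - 1)) - P k - pderiv (P (k - 1))"
  have fact_k: "(fact k :: rat) = of_nat k * fact (k - 1)"
    using assms(1) by (simp add: fact_reduce)
  have "smult (fact k) R = smult (fact k * of_nat (k - 1)) (P (k - 1)) - Q k
      - smult (fact k) (pderiv (P (k - 1)))"
    unfolding R_def Q_def by (simp only: smult_diff_right smult_smult)
  also have "\<dots> = smult (of_nat (k * (k - 1))) (Q (k - 1)) - Q k - smult (of_nat k) (pderiv (Q (k - 1)))"
    unfolding Q_def pderiv_smult smult_smult fact_k of_nat_mult by (simp only: ac_simps)
  finally have R: "smult (fact k) R
      = smult (of_nat (k * (k - 1))) (Q (k - 1)) - Q k - smult (of_nat k) (pderiv (Q (k - 1)))" .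
  have "of_nat (fact k * fact (m - k) * (m choose k)) = (fact m :: rat)"
    unfolding binomial_fact_lemma[OF assms(2)] by (rule of_nat_fact)
  then have "(fact m :: rat) * of_nat k = of_nat ((m choose k) * k) * (fact (m - k) * fact k)"
    by (simp add: of_nat_mult mult_ac)
  then have "smult (fact m) (smult (of_nat k) R * P (m - k))
      = smult (of_nat ((m choose k) * k)) (smult (fact k) R * Q (m - k))"
    unfolding Q_def by (simp only: mult_smult_left mult_smult_right smult_smult)
  then show ?thesis
    unfolding R_def[symmetric] R .
qed

lemma Q_rec:
  assumes "n = Suc m"
  shows "Q n = smult (of_nat (n * n)) (Q m) - smult (of_nat n) (pderiv (Q m))
     + (\<Sum>k = 1..m. smult (of_nat ((m choose k) * k))
          ((smult (of_nat (k * (k - 1))) (Q (k - 1)) - Q k - smult (of_nat k) (pderiv (Q (k - 1))))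
           * Q (m - k)))" (is "_ = ?rhs")
proof -
  have leading: "smult (fact n) (smult (of_nat n) (P m) - pderiv (P m))
      = smult (of_nat (n * n)) (Q m) - smult (of_nat n) (pderiv (Q m))"
    by (simp add: assms Q_def smult_diff_right pderiv_smult algebra_simps)
  have "(fact n :: rat) * (1 / of_nat n) = fact m"
    using assms by (simp add: field_simps del: of_nat_Suc)
  then have scale: "smult (fact n) (smult (1 / of_nat n) S) = smult (fact m) S" for S :: "rat poly"
    by (simp only: smult_smult)
  have "P n = smult (of_nat n) (P m) - pderiv (P m)
      + smult (1 / of_nat n) (\<Sum>k = 1..m. smult (of_nat k)
          (smult (of_nat (k - 1)) (P (k - 1)) - P k - pderiv (P (k - 1))) * P (m - k))"
    using P_rec[of n] assms by simp
  then have "Q n = smult (of_nat (n * n)) (Q m) - smult (of_nat n) (pderiv (Q m))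
      + (\<Sum>k = 1..m. smult (fact m) (smult (of_nat k)
          (smult (of_nat (k - 1)) (P (k - 1)) - P k - pderiv (P (k - 1))) * P (m - k)))"
    by (simp only: Q_def[of n] smult_add_right leading scale smult_sum_right)
  also have "\<dots> = ?rhs"
    by (intro arg_cong2[where f = "(+)"] refl sum.cong fact_scaled_summand) auto
  finally show ?thesis .
qed

lemma int_coeffs_Q: "int_coeffs (Q n)"
proof (induction n rule: less_induct)
  case (less n)
  show ?case
  proof (cases n)
    case 0
    then show ?thesis
      by (auto simp: Q_def P_0 int_coeffs_def coeff_pCons split: nat.splits)
  next
    case (Suc m)
    then show ?thesis
      unfolding Q_rec[OF Suc]
      using less by (intro int_coeffs_add int_coeffs_diff int_coeffs_smult_of_nat
          int_coeffs_pderiv int_coeffs_sum int_coeffs_mult) auto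
  qed
qed

theorem theorem4p5:
  shows "(\<forall>n\<ge>1. degree (P n) \<le> n)
       \<and> (\<forall>n i. fact n * coeff (P n) i \<in> \<int>)"
proof (intro conjI allI impI)
  show "degree (P n) \<le> n" if "n \<ge> 1" for n
    using degree_P_le[of n] that by simp
  show "fact n * coeff (P n) i \<in> \<int>" for n i
    using int_coeffs_Q[of n] by (simp add: int_coeffs_def Q_def)
qed

end
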